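(* Let $A[0..m-1]$ and $B[0..n-1]$ be arrays sorted with respect to a total preorder $\leq$ on keys, and let $p\geq 1$ processing elements with shared access to $A$, $B$ and an output array $C[0..m+n-1]$ execute the parallel merge algorithm described in the context. Then afterwards $C=\mathsf{stable\_merge}(A,B,\leq)$ (the merge is stable), the number of elements merged by each processing element is at most $\lceil (m+n)/p\rceil$, and the total time complexity is $\mathcal{O}\!\left(\frac{n+m}{p}+\log\min(m,n)\right)$.
   Context: $\mathsf{stable\_merge}(X,Y,\leq)$ is the sorted merge of $X$ and $Y$ preserving the relative order within each array and placing elements of $X$ before equal-keyed elements of $Y$; a sequential stable merge of arrays of lengths $a,b$ running in $\mathcal{O}(a+b)$ time is assumed available. For $0\le i\le m+n$, the co-ranks of $i$ are the unique $(j,k)$ with $0\le j\le m$, $0\le k\le n$, $j+k=i$, ($j=0$ or $A[j-1]\leq B[k]$) and ($k=0$ or $B[k-1]<A[j]$) (with sentinels $A[m]=B[n]=+\infty$); they are computed by the procedure $\mathsf{co\_rank}$: set $j\gets\min(i,m)$, $k\gets i-j$, $j_{\rm low}\gets\max(0,i-n)$; repeat: if $j>0$, $k<n$ and $A[j-1]>B[k]$ then $\delta\gets\lceil (j-j_{\rm low})/2\rceil$, $k_{\rm low}\gets k$, $j\gets j-\delta$, $k\gets k+\delta$; else if $k>0$, $j<m$ and $B[k-1]\geq A[j]$ then $\delta\gets\lceil (k-k_{\rm low})/2\rceil$, $j_{\rm low}\gets j$, $j\gets j+\delta$, $k\gets k-\delta$; else stop and return $(j,k)$. Parallel merge algorithm: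 processing element $r$, $0\le r<p$, independently computes $i_r=\lfloor r(m+n)/p\rfloor$ and $i_{r+1}=\lfloor (r+1)(m+n)/p\rfloor$, computes $(j_r,k_r)=\mathsf{co\_rank}(i_r,A,m,B,n,\leq)$ and $(j_{r+1},k_{r+1})=\mathsf{co\_rank}(i_{r+1},A,m,B,n,\leq)$, and then sequentially stably merges $A[j_r,\ldots,j_{r+1}-1]$ and $B[k_r,\ldots,k_{r+1}-1]$ into $C[i_r,\ldots,i_{r+1}-1]$. *)

theory Defs
  imports Complex_Main "HOL-Library.While_Combinator"
begin

definition total_preorder :: "('a \<Rightarrow> 'a \<Rightarrow> bool) \<Rightarrow> bool" where
  "total_preorder le \<longleftrightarrow> (\<forall>x y. le x y \<or> le y x) \<and> (\<forall>x y z. le x y \<longrightarrow> le y z \<longrightarrow> le x z)"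

fun stable_merge :: "('a \<Rightarrow> 'a \<Rightarrow> bool) \<Rightarrow> 'a list \<Rightarrow> 'a list \<Rightarrow> 'a list" where
  "stable_merge le [] ys = ys"
| "stable_merge le xs [] = xs"
| "stable_merge le (x # xs) (y # ys) =
     (if le x y then x # stable_merge le xs (y # ys) else y # stable_merge le (x # xs) ys)"

type_synonym cr_state = "nat \<times> nat \<times> nat \<times> nat"

definition cr_branch1 :: "('a \<Rightarrow> 'a \<Rightarrow> bool) \<Rightarrow> 'a list \<Rightarrow> 'a list \<Rightarrow> cr_state \<Rightarrow> bool" where
  "cr_branch1 le A B s = (case s of (j, k, jl, kl) \<Rightarrow>
     0 < j \<and> k < length B \<and> \<not> le (A ! (j - 1)) (B ! k))"

definition cr_branch2 :: "('a \<Rightarrow> 'a \<Rightarrow> bool) \<Rightarrow> 'a list \<Rightarrow> 'a list \<Rightarrow> cr_state \<Rightarrow> bool" where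
  "cr_branch2 le A B s = (case s of (j, k, jl, kl) \<Rightarrow>
     0 < k \<and> j < length A \<and> le (A ! j) (B ! (k - 1)))"

definition cr_cont :: "('a \<Rightarrow> 'a \<Rightarrow> bool) \<Rightarrow> 'a list \<Rightarrow> 'a list \<Rightarrow> cr_state \<Rightarrow> bool" where
  "cr_cont le A B s \<longleftrightarrow> cr_branch1 le A B s \<or> cr_branch2 le A B s"

text \<open>One loop iteration. delta = ceil(x/2) = (x + 1) div 2.\<close>
definition cr_body :: "('a \<Rightarrow> 'a \<Rightarrow> bool) \<Rightarrow> 'a list \<Rightarrow> 'a list \<Rightarrow> cr_state \<Rightarrow> cr_state" where
  "cr_body le A B s = (case s of (j, k, jl, kl) \<Rightarrow>
     if cr_branch1 le A B s then
       (let d = (j - jl + 1) div 2 in (j - d, k + d, jl, k))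
     else if cr_branch2 le A B s then
       (let d = (k - kl + 1) div 2 in (j + d, k - d, j, kl))
     else s)"

definition cr_init :: "'a list \<Rightarrow> 'a list \<Rightarrow> nat \<Rightarrow> cr_state" where
  "cr_init A B i = (min i (length A), i - min i (length A), i - length B, i - length A)"

definition co_rank :: "('a \<Rightarrow> 'a \<Rightarrow> bool) \<Rightarrow> nat \<Rightarrow> 'a list \<Rightarrow> 'a list \<Rightarrow> (nat \<times> nat) option" where
  "co_rank le i A B =
     map_option (\<lambda>(j, k, jl, kl). (j, k)) (while_option (cr_cont le A B) (cr_body le A B) (cr_init A B i))"

definition co_rank_steps :: "('a \<Rightarrow> 'a \<Rightarrow> bool) \<Rightarrow> nat \<Rightarrow> 'a list \<Rightarrow> 'a list \<Rightarrow> nat" where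
  "co_rank_steps le i A B = (LEAST t. \<not> cr_cont le A B ((cr_body le A B ^^ t) (cr_init A B i)))"

definition seg_bound :: "nat \<Rightarrow> nat \<Rightarrow> nat \<Rightarrow> nat" where
  "seg_bound N p r = r * N div p"

definition pe_corank :: "('a \<Rightarrow> 'a \<Rightarrow> bool) \<Rightarrow> 'a list \<Rightarrow> 'a list \<Rightarrow> nat \<Rightarrow> nat \<Rightarrow> nat \<times> nat" where
  "pe_corank le A B p r = the (co_rank le (seg_bound (length A + length B) p r) A B)"

definition slice :: "'a list \<Rightarrow> nat \<Rightarrow> nat \<Rightarrow> 'a list" where
  "slice xs a b = take (b - a) (drop a xs)"

definition pe_output :: "('a \<Rightarrow> 'a \<Rightarrow> bool) \<Rightarrow> 'a list \<Rightarrow> 'a list \<Rightarrow> nat \<Rightarrow> nat \<Rightarrow> 'a list" where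
  "pe_output le A B p r =
     (let (j0, k0) = pe_corank le A B p r; (j1, k1) = pe_corank le A B p (Suc r)
      in stable_merge le (slice A j0 j1) (slice B k0 k1))"

definition pe_work :: "('a \<Rightarrow> 'a \<Rightarrow> bool) \<Rightarrow> 'a list \<Rightarrow> 'a list \<Rightarrow> nat \<Rightarrow> nat \<Rightarrow> nat" where
  "pe_work le A B p r =
     (let (j0, k0) = pe_corank le A B p r; (j1, k1) = pe_corank le A B p (Suc r)
      in (j1 - j0) + (k1 - k0))"

text \<open>Output array C: PE r writes its merged segment into C[i_r..i_{r+1}-1]; C is the
  concatenation of these segments in order of r.\<close>
definition par_merge :: "('a \<Rightarrow> 'a \<Rightarrow> bool) \<Rightarrow> 'a list \<Rightarrow> 'a list \<Rightarrow> nat \<Rightarrow> 'a list" where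
  "par_merge le A B p = concat (map (pe_output le A B p) [0..<p])"

text \<open>Cost model for processing element r: one unit of setup, one unit per co_rank loop
  iteration (both calls), and one unit per merged element (linear sequential merge).\<close>
definition pe_time :: "('a \<Rightarrow> 'a \<Rightarrow> bool) \<Rightarrow> 'a list \<Rightarrow> 'a list \<Rightarrow> nat \<Rightarrow> nat \<Rightarrow> nat" where
  "pe_time le A B p r =
     1 + co_rank_steps le (seg_bound (length A + length B) p r) A B
       + co_rank_steps le (seg_bound (length A + length B) p (Suc r)) A B
       + pe_work le A B p r"

end

theory Submission
  imports Defs
begin

text \<open>
  A pair (j, k) with j + k = i is a co-rank of i exactly when the first i elements of the
  stable merge of A and B are the stable merge of the prefixes of lengths j and k.
  Co-ranks of increasing ranks increase componentwise, so cutting at the co-ranks of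
  i_0 = 0 \<le> i_1 \<le> \<dots> \<le> i_p = m + n splits the merge into p independent pieces of
  sizes i_{r+1} - i_r \<le> \<lceil>(m+n)/p\<rceil>.
  The co_rank loop keeps lower bounds j_low, k_low that are either trivial or points at
  which the loop already moved the other way; every step at least halves the uncertainty
  max (j - j_low) (k - k_low), which starts at most min m n, so the loop runs
  O(log min m n) times.
\<close>

lemma total_preorder_refl: "total_preorder le \<Longrightarrow> le x x"
  unfolding total_preorder_def by blast

lemma total_preorder_trans: "total_preorder le \<Longrightarrow> le x y \<Longrightarrow> le y z \<Longrightarrow> le x z"
  unfolding total_preorder_def by blast

lemma sorted_wrt_nth_le:
  "total_preorder le \<Longrightarrow> sorted_wrt le xs \<Longrightarrow> a \<le> b \<Longrightarrow> b < length xs \<Longrightarrow> le (xs ! a) (xs ! b)"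
  by (metis le_eq_less_or_eq sorted_wrt_nth_less total_preorder_refl)

lemma stable_merge_Nil2 [simp]: "stable_merge le xs [] = xs"
  by (cases xs) auto

lemma length_stable_merge [simp]: "length (stable_merge le xs ys) = length xs + length ys"
  by (induction le xs ys rule: stable_merge.induct) auto

text \<open>The stopping condition of co_rank, i.e. the co-rank conditions with the sentinels
  A[m] = B[n] = +\<infinity> made explicit.\<close>
definition is_co_rank :: "('a \<Rightarrow> 'a \<Rightarrow> bool) \<Rightarrow> 'a list \<Rightarrow> 'a list \<Rightarrow> nat \<Rightarrow> nat \<Rightarrow> bool" where
  "is_co_rank le A B j k \<longleftrightarrow>
     (j = 0 \<or> k = length B \<or> le (A ! (j - 1)) (B ! k)) \<and>
     (k = 0 \<or> j = length A \<or> \<not> le (A ! j) (B ! (k - 1)))"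

lemma is_co_rank_Cons_left: "is_co_rank le (x # xs) B j k \<Longrightarrow> 0 < j \<Longrightarrow> is_co_rank le xs B (j - 1) k"
  unfolding is_co_rank_def by (cases j; cases "j - 1") auto

lemma is_co_rank_Cons_right: "is_co_rank le A (y # ys) j k \<Longrightarrow> 0 < k \<Longrightarrow> is_co_rank le A ys j (k - 1)"
  unfolding is_co_rank_def by (cases k; cases "k - 1") auto

lemma stable_merge_split_at_co_rank:
  assumes "total_preorder le" "sorted_wrt le A" "sorted_wrt le B"
    and "j \<le> length A" "k \<le> length B" "is_co_rank le A B j k"
  shows "stable_merge le A B = stable_merge le (take j A) (take k B) @ stable_merge le (drop j A) (drop k B)"
  using assms
proof (induction le A B arbitrary: j k rule: stable_merge.induct)
  case (3 le x xs y ys)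
  note tp = \<open>total_preorder le\<close> and ok = \<open>is_co_rank le (x # xs) (y # ys) j k\<close>
  show ?case
  proof (cases "j = 0 \<and> k = 0")
    case False
    show ?thesis
    proof (cases "le x y")
      case True
      have "0 < j"
      proof (rule ccontr)
        assume "\<not> 0 < j"
        with False have "j = 0" "0 < k" by auto
        have "le y ((y # ys) ! (k - 1))"
          using sorted_wrt_nth_le[OF tp \<open>sorted_wrt le (y # ys)\<close>, of 0 "k - 1"] "3.prems"(5) \<open>0 < k\<close> by simp
        then have "le x ((y # ys) ! (k - 1))" by (rule total_preorder_trans[OF tp True])
        with ok \<open>j = 0\<close> \<open>0 < k\<close> show False unfolding is_co_rank_def by simp
      qed
      have "stable_merge le xs (y # ys) =
          stable_merge le (take (j - 1) xs) (take k (y # ys)) @ stable_merge le (drop (j - 1) xs) (drop k (y # ys))"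
        using "3.IH"(1)[OF True tp] "3.prems" is_co_rank_Cons_left[OF ok \<open>0 < j\<close>] by simp
      moreover have "stable_merge le (take j (x # xs)) (take k (y # ys)) =
          x # stable_merge le (take (j - 1) xs) (take k (y # ys))"
        using \<open>0 < j\<close> True by (cases j; cases k) auto
      ultimately show ?thesis
        using \<open>0 < j\<close> True by (cases j) auto
    next
      case False
      have "0 < k"
      proof (rule ccontr)
        assume "\<not> 0 < k"
        with \<open>\<not> (j = 0 \<and> k = 0)\<close> have "k = 0" "0 < j" by auto
        have "le x ((x # xs) ! (j - 1))"
          using sorted_wrt_nth_le[OF tp \<open>sorted_wrt le (x # xs)\<close>, of 0 "j - 1"] "3.prems"(4) \<open>0 < j\<close> by simp
        moreover have "le ((x # xs) ! (j - 1)) y" using ok \<open>k = 0\<close> \<open>0 < j\<close> unfolding is_co_rank_def by simp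
        ultimately show False using total_preorder_trans[OF tp] False by blast
      qed
      have "stable_merge le (x # xs) ys =
          stable_merge le (take j (x # xs)) (take (k - 1) ys) @ stable_merge le (drop j (x # xs)) (drop (k - 1) ys)"
        using "3.IH"(2)[OF False tp] "3.prems" is_co_rank_Cons_right[OF ok \<open>0 < k\<close>] by simp
      moreover have "stable_merge le (take j (x # xs)) (take k (y # ys)) =
          y # stable_merge le (take j (x # xs)) (take (k - 1) ys)"
        using \<open>0 < k\<close> False by (cases j; cases k) auto
      ultimately show ?thesis
        using \<open>0 < k\<close> False by (cases k) auto
    qed
  qed simp
qed simp_all

lemma is_co_rank_mono:
  assumes tp: "total_preorder le" and sA: "sorted_wrt le A" and sB: "sorted_wrt le B"
    and ok1: "is_co_rank le A B j1 k1" and ok2: "is_co_rank le A B j2 k2"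
    and bounds: "j1 \<le> length A" "k1 \<le> length B" "j2 \<le> length A" "k2 \<le> length B"
    and sum: "j1 + k1 \<le> j2 + k2"
  shows "j1 \<le> j2 \<and> k1 \<le> k2"
proof (rule ccontr)
  assume "\<not> (j1 \<le> j2 \<and> k1 \<le> k2)"
  then consider "j2 < j1" "k1 < k2" | "j1 < j2" "k2 < k1" using sum by linarith
  then show False
  proof cases
    case 1
    have "le (A ! j2) (A ! (j1 - 1))" "le (B ! k1) (B ! (k2 - 1))"
      using sorted_wrt_nth_le[OF tp sA] sorted_wrt_nth_le[OF tp sB] 1 bounds by simp_all
    moreover have "le (A ! (j1 - 1)) (B ! k1)" "\<not> le (A ! j2) (B ! (k2 - 1))"
      using ok1 ok2 1 bounds unfolding is_co_rank_def by auto
    ultimately show False using total_preorder_trans[OF tp] by blast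
  next
    case 2
    have "le (A ! j1) (A ! (j2 - 1))" "le (B ! k2) (B ! (k1 - 1))"
      using sorted_wrt_nth_le[OF tp sA] sorted_wrt_nth_le[OF tp sB] 2 bounds by simp_all
    moreover have "le (A ! (j2 - 1)) (B ! k2)" "\<not> le (A ! j1) (B ! (k1 - 1))"
      using ok1 ok2 2 bounds unfolding is_co_rank_def by auto
    ultimately show False using total_preorder_trans[OF tp] by blast
  qed
qed

lemma is_co_rank_drop:
  assumes "is_co_rank le A B j k" "j0 \<le> j" "k0 \<le> k" "j \<le> length A" "k \<le> length B"
  shows "is_co_rank le (drop j0 A) (drop k0 B) (j - j0) (k - k0)"
  using assms unfolding is_co_rank_def by (auto simp: nth_drop)

lemma cr_branches_ignore_bounds:
  "cr_branch1 le A B (j, k, a, b) = cr_branch1 le A B (j, k, c, d)"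
  "cr_branch2 le A B (j, k, a, b) = cr_branch2 le A B (j, k, c, d)"
  unfolding cr_branch1_def cr_branch2_def by auto

lemma cr_branch2_below_branch1:
  assumes tp: "total_preorder le" and sA: "sorted_wrt le A" and sB: "sorted_wrt le B"
    and b2: "cr_branch2 le A B (j0, k0, x, y)" and b1: "cr_branch1 le A B (j, k, u, v)"
    and sum: "j0 + k0 = j + k"
  shows "j0 + 2 \<le> j"
proof (rule ccontr)
  assume "\<not> j0 + 2 \<le> j"
  have h2: "0 < k0" "j0 < length A" "le (A ! j0) (B ! (k0 - 1))" using b2 unfolding cr_branch2_def by auto
  have h1: "0 < j" "k < length B" "\<not> le (A ! (j - 1)) (B ! k)" using b1 unfolding cr_branch1_def by auto
  have "le (A ! (j - 1)) (A ! j0)" using sorted_wrt_nth_le[OF tp sA] h2 h1 \<open>\<not> j0 + 2 \<le> j\<close> by simp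
  moreover have "le (B ! (k0 - 1)) (B ! k)" using sorted_wrt_nth_le[OF tp sB] h2 h1 \<open>\<not> j0 + 2 \<le> j\<close> sum by simp
  ultimately show False using h1 h2 total_preorder_trans[OF tp] by blast
qed

lemma cr_body_stopped: "\<not> cr_cont le A B s \<Longrightarrow> cr_body le A B s = s"
  unfolding cr_cont_def cr_body_def by (auto split: prod.splits)

text \<open>j_low is either the trivial lower bound i - n or a split point at which the second
  branch fires, so that every co-rank of i lies strictly above it; symmetrically for k_low.
  The last two components of a state never matter to cr_branch1 and cr_branch2, hence the
  dummy zeros.\<close>
definition cr_inv :: "('a \<Rightarrow> 'a \<Rightarrow> bool) \<Rightarrow> 'a list \<Rightarrow> 'a list \<Rightarrow> nat \<Rightarrow> cr_state \<Rightarrow> bool" where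
  "cr_inv le A B i s = (case s of (j, k, jl, kl) \<Rightarrow>
     j + k = i \<and> jl \<le> j \<and> kl \<le> k \<and> i - length B \<le> jl \<and> i - length A \<le> kl
     \<and> (jl = i - length B \<or> cr_branch2 le A B (jl, i - jl, 0, 0))
     \<and> (kl = i - length A \<or> cr_branch1 le A B (i - kl, kl, 0, 0)))"

definition cr_gap :: "cr_state \<Rightarrow> nat" where
  "cr_gap s = (case s of (j, k, jl, kl) \<Rightarrow> max (j - jl) (k - kl))"

context
  fixes le and A B :: "'a list" and i
  assumes tp: "total_preorder le" and sA: "sorted_wrt le A" and sB: "sorted_wrt le B"
    and i_le: "i \<le> length A + length B"
begin

lemma cr_inv_bounds: "cr_inv le A B i (j, k, jl, kl) \<Longrightarrow> j \<le> length A \<and> k \<le> length B"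
  using i_le unfolding cr_inv_def by auto

lemma cr_inv_init: "cr_inv le A B i (cr_init A B i)"
  using i_le unfolding cr_inv_def cr_init_def by auto

lemma cr_gap_init: "cr_gap (cr_init A B i) \<le> min (length A) (length B)"
  using i_le unfolding cr_gap_def cr_init_def by auto

lemma cr_inv_branch1_gap:
  assumes inv: "cr_inv le A B i (j, k, jl, kl)" and b1: "cr_branch1 le A B (j, k, jl, kl)"
  shows "jl < j"
proof -
  have I: "j + k = i" "jl \<le> j" "jl = i - length B \<or> cr_branch2 le A B (jl, i - jl, 0, 0)"
    using inv unfolding cr_inv_def by auto
  have "0 < j" "k < length B" using b1 unfolding cr_branch1_def by auto
  with I show ?thesis
    using cr_branch2_below_branch1[OF tp sA sB _ b1, of jl "i - jl" 0 0] by fastforce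
qed

lemma cr_inv_branch2_gap:
  assumes inv: "cr_inv le A B i (j, k, jl, kl)" and b2: "cr_branch2 le A B (j, k, jl, kl)"
  shows "kl < k"
proof (rule ccontr)
  assume "\<not> kl < k"
  moreover have I: "j + k = i" "kl \<le> k" "kl = i - length A \<or> cr_branch1 le A B (i - kl, kl, 0, 0)"
    using inv unfolding cr_inv_def by auto
  ultimately have "kl = k" "i - kl = j" by auto
  have "0 < k" "j < length A" using b2 unfolding cr_branch2_def by auto
  with I \<open>kl = k\<close> \<open>i - kl = j\<close> have "cr_branch1 le A B (j, k, 0, 0)" by auto
  from cr_branch2_below_branch1[OF tp sA sB b2 this] show False by simp
qed

lemma cr_step_branch1:
  assumes inv: "cr_inv le A B i s" and s: "s = (j, k, jl, kl)" and b1: "cr_branch1 le A B s"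
  shows "cr_inv le A B i (cr_body le A B s)"
    and "cr_gap (cr_body le A B s) \<le> (cr_gap s + 1) div 2"
    and "cr_gap s \<le> 1 \<Longrightarrow> \<not> cr_cont le A B (cr_body le A B s)"
proof -
  define d where "d = (j - jl + 1) div 2"
  have I: "j + k = i" "jl \<le> j" "kl \<le> k" "i - length B \<le> jl" "i - length A \<le> kl"
    "jl = i - length B \<or> cr_branch2 le A B (jl, i - jl, 0, 0)"
    using inv unfolding s cr_inv_def by auto
  have "jl < j" using cr_inv_branch1_gap inv b1 s by simp
  then have d: "1 \<le> d" "d \<le> j - jl" "j - jl - d \<le> d" unfolding d_def by linarith+
  have body: "cr_body le A B s = (j - d, k + d, jl, k)"
    using b1 unfolding s cr_body_def d_def by (simp add: Let_def)
  have "cr_branch1 le A B (i - k, k, 0, 0)"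
    using b1 I(1) unfolding s by (metis add_diff_cancel_right' cr_branches_ignore_bounds(1))
  with I d show inv': "cr_inv le A B i (cr_body le A B s)"
    unfolding body cr_inv_def by simp
  have "d \<le> (cr_gap s + 1) div 2" unfolding d_def s cr_gap_def by (simp add: div_le_mono)
  with d show "cr_gap (cr_body le A B s) \<le> (cr_gap s + 1) div 2" unfolding body cr_gap_def by simp
  assume "cr_gap s \<le> 1"
  then have "d = 1" "j - d = jl" using d unfolding s cr_gap_def by auto
  have "\<not> cr_branch1 le A B (j - d, k + d, jl, k)"
    using cr_inv_branch1_gap[of "j - d" "k + d" jl k] inv' \<open>j - d = jl\<close> unfolding body by auto
  moreover have "\<not> cr_branch2 le A B (j - d, k + d, jl, k)"
    using b1 \<open>d = 1\<close> unfolding s cr_branch1_def cr_branch2_def by auto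
  ultimately show "\<not> cr_cont le A B (cr_body le A B s)" unfolding body cr_cont_def by simp
qed

lemma cr_step_branch2:
  assumes inv: "cr_inv le A B i s" and s: "s = (j, k, jl, kl)"
    and b1: "\<not> cr_branch1 le A B s" and b2: "cr_branch2 le A B s"
  shows "cr_inv le A B i (cr_body le A B s)"
    and "cr_gap (cr_body le A B s) \<le> (cr_gap s + 1) div 2"
    and "cr_gap s \<le> 1 \<Longrightarrow> \<not> cr_cont le A B (cr_body le A B s)"
proof -
  define d where "d = (k - kl + 1) div 2"
  have I: "j + k = i" "jl \<le> j" "kl \<le> k" "i - length B \<le> jl" "i - length A \<le> kl"
    "kl = i - length A \<or> cr_branch1 le A B (i - kl, kl, 0, 0)"
    using inv unfolding s cr_inv_def by auto
  have "j \<le> length A" using cr_inv_bounds inv s by simp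
  have "kl < k" using cr_inv_branch2_gap inv b2 s by simp
  then have d: "1 \<le> d" "d \<le> k - kl" "k - kl - d \<le> d" unfolding d_def by linarith+
  have body: "cr_body le A B s = (j + d, k - d, j, kl)"
    using b1 b2 unfolding s cr_body_def d_def by (simp add: Let_def)
  have "cr_branch2 le A B (j, i - j, 0, 0)"
    using b2 I(1) unfolding s by (metis add_diff_cancel_left' cr_branches_ignore_bounds(2))
  with I d \<open>j \<le> length A\<close> show inv': "cr_inv le A B i (cr_body le A B s)"
    unfolding body cr_inv_def by auto
  have "d \<le> (cr_gap s + 1) div 2" unfolding d_def s cr_gap_def by (simp add: div_le_mono)
  with d show "cr_gap (cr_body le A B s) \<le> (cr_gap s + 1) div 2" unfolding body cr_gap_def by simp
  assume "cr_gap s \<le> 1"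
  then have "d = 1" "k - d = kl" using d unfolding s cr_gap_def by auto
  have "\<not> cr_branch2 le A B (j + d, k - d, j, kl)"
    using cr_inv_branch2_gap[of "j + d" "k - d" j kl] inv' \<open>k - d = kl\<close> unfolding body by auto
  moreover have "\<not> cr_branch1 le A B (j + d, k - d, j, kl)"
    using b2 \<open>d = 1\<close> unfolding s cr_branch1_def cr_branch2_def by auto
  ultimately show "\<not> cr_cont le A B (cr_body le A B s)" unfolding body cr_cont_def by simp
qed

lemma cr_inv_body:
  assumes inv: "cr_inv le A B i s"
  shows "cr_inv le A B i (cr_body le A B s)"
proof -
  obtain j k jl kl where s: "s = (j, k, jl, kl)" by (cases s) auto
  show ?thesis
    using cr_step_branch1(1)[OF inv s] cr_step_branch2(1)[OF inv s] cr_body_stopped[of le A B s] inv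
    unfolding cr_cont_def by (cases "cr_branch1 le A B s"; cases "cr_branch2 le A B s") auto
qed

lemma cr_gap_body:
  assumes inv: "cr_inv le A B i s" and cont: "cr_cont le A B s"
  shows "cr_gap (cr_body le A B s) \<le> (cr_gap s + 1) div 2"
proof -
  obtain j k jl kl where s: "s = (j, k, jl, kl)" by (cases s) auto
  show ?thesis
    using cr_step_branch1(2)[OF inv s] cr_step_branch2(2)[OF inv s] cont
    unfolding cr_cont_def by blast
qed

lemma cr_body_stops:
  assumes inv: "cr_inv le A B i s" and cont: "cr_cont le A B s" and "cr_gap s \<le> 1"
  shows "\<not> cr_cont le A B (cr_body le A B s)"
proof -
  obtain j k jl kl where s: "s = (j, k, jl, kl)" by (cases s) auto
  show ?thesis
    using cr_step_branch1(3)[OF inv s] cr_step_branch2(3)[OF inv s] cont \<open>cr_gap s \<le> 1\<close>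
    unfolding cr_cont_def by blast
qed

abbreviation cr_iterate :: "nat \<Rightarrow> cr_state" where
  "cr_iterate t \<equiv> (cr_body le A B ^^ t) (cr_init A B i)"

lemma cr_inv_iterate: "cr_inv le A B i (cr_iterate t)"
  by (induction t) (simp_all add: cr_inv_init cr_inv_body)

lemma cr_cont_iterate_Suc: "cr_cont le A B (cr_iterate (Suc t)) \<Longrightarrow> cr_cont le A B (cr_iterate t)"
  using cr_body_stopped[of le A B "cr_iterate t"] by force

lemma cr_gap_iterate:
  "cr_cont le A B (cr_iterate t) \<Longrightarrow> cr_gap (cr_iterate t) \<le> cr_gap (cr_init A B i) div 2 ^ t + 1"
proof (induction t)
  case (Suc t)
  then have cont: "cr_cont le A B (cr_iterate t)" using cr_cont_iterate_Suc by blast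
  have "cr_gap (cr_iterate (Suc t)) \<le> (cr_gap (cr_iterate t) + 1) div 2"
    using cr_gap_body[OF cr_inv_iterate cont] by simp
  also have "\<dots> \<le> (cr_gap (cr_init A B i) div 2 ^ t + 2) div 2"
    using Suc.IH[OF cont] div_le_mono by simp
  also have "\<dots> = cr_gap (cr_init A B i) div 2 ^ t div 2 + 1" by simp
  also have "\<dots> = cr_gap (cr_init A B i) div 2 ^ Suc t + 1"
    by (simp only: power_Suc2 div_mult2_eq)
  finally show ?case .
qed simp

lemma cr_iterate_cont_pow_le:
  assumes "cr_cont le A B (cr_iterate (Suc t))"
  shows "2 ^ t \<le> min (length A) (length B)"
proof -
  have cont: "cr_cont le A B (cr_iterate t)" using cr_cont_iterate_Suc assms by blast
  have "2 \<le> cr_gap (cr_iterate t)"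
    using cr_body_stops[OF cr_inv_iterate cont] assms by fastforce
  with cr_gap_iterate[OF cont] have "0 < cr_gap (cr_init A B i) div 2 ^ t" by linarith
  then have "2 ^ t \<le> cr_gap (cr_init A B i)" by (simp add: div_greater_zero_iff)
  with cr_gap_init show ?thesis by linarith
qed

lemma cr_terminates: "\<not> cr_cont le A B (cr_iterate (Suc (min (length A) (length B))))"
  using cr_iterate_cont_pow_le less_exp[of "min (length A) (length B)"] by (meson leD)

lemma co_rank_steps_eq: "co_rank_steps le i A B = (LEAST t. \<not> cr_cont le A B (cr_iterate t))"
  unfolding co_rank_steps_def ..

lemma co_rank_is_co_rank:
  "\<exists>j k. co_rank le i A B = Some (j, k) \<and> j + k = i \<and> j \<le> length A \<and> k \<le> length B
     \<and> is_co_rank le A B j k"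
proof -
  define S where "S = co_rank_steps le i A B"
  have halts: "\<exists>t. \<not> cr_cont le A B (cr_iterate t)" using cr_terminates by blast
  have stop: "\<not> cr_cont le A B (cr_iterate S)"
    unfolding S_def co_rank_steps_eq using halts by (rule LeastI_ex)
  have "while_option (cr_cont le A B) (cr_body le A B) (cr_init A B i) = Some (cr_iterate S)"
    unfolding while_option_def S_def co_rank_steps_eq using halts by simp
  moreover obtain j k jl kl where s: "cr_iterate S = (j, k, jl, kl)" by (cases "cr_iterate S") auto
  moreover have "j + k = i" "j \<le> length A" "k \<le> length B"
    using cr_inv_iterate[of S] cr_inv_bounds[of j k jl kl] unfolding s cr_inv_def by auto
  moreover have "is_co_rank le A B j k"
    using stop \<open>j \<le> length A\<close> \<open>k \<le> length B\<close>
    unfolding s cr_cont_def cr_branch1_def cr_branch2_def is_co_rank_def by auto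
  ultimately show ?thesis unfolding co_rank_def by simp
qed

lemma co_rank_steps_le_log:
  "real (co_rank_steps le i A B) \<le> log 2 (real (min (length A) (length B)) + 1) + 2"
proof (cases "co_rank_steps le i A B \<le> 1")
  case False
  define t where "t = co_rank_steps le i A B - 2"
  have t: "co_rank_steps le i A B = Suc (Suc t)" using False unfolding t_def by linarith
  have "cr_cont le A B (cr_iterate (Suc t))"
    using not_less_Least[of "Suc t" "\<lambda>t. \<not> cr_cont le A B (cr_iterate t)"] t
    unfolding co_rank_steps_eq by simp
  then have "2 ^ t \<le> min (length A) (length B)" by (rule cr_iterate_cont_pow_le)
  then have "real (2 ^ t) \<le> real (min (length A) (length B))" by (simp only: of_nat_le_iff)
  then have "(2::real) ^ t \<le> real (min (length A) (length B)) + 1"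
    unfolding of_nat_power of_nat_numeral by linarith
  then have "real t \<le> log 2 (real (min (length A) (length B)) + 1)"
    by (intro le_log_of_power) auto
  with t show ?thesis by simp
next
  case True
  then have "real (co_rank_steps le i A B) \<le> 1" by simp
  moreover have "0 \<le> log 2 (real (min (length A) (length B)) + 1)" by simp
  ultimately show ?thesis by linarith
qed

end

lemma of_nat_le_ceiling_if_less: "real w < x + 1 \<Longrightarrow> real w \<le> real_of_int \<lceil>x\<rceil>"
proof -
  assume "real w < x + 1"
  then have "int w \<le> \<lceil>x\<rceil>" by (simp add: le_ceiling_iff)
  then show ?thesis by (simp flip: of_int_le_iff)
qed

lemma seg_bound_le: "r \<le> p \<Longrightarrow> 0 < p \<Longrightarrow> seg_bound N p r \<le> N"
  unfolding seg_bound_def by (metis div_le_mono mult_le_mono1 nonzero_mult_div_cancel_left not_gr0)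

lemma seg_bound_mono: "r \<le> r' \<Longrightarrow> seg_bound N p r \<le> seg_bound N p r'"
  unfolding seg_bound_def by (intro div_le_mono mult_le_mono1)

lemma seg_bound_self: "0 < p \<Longrightarrow> seg_bound N p p = N"
  unfolding seg_bound_def by simp

lemma seg_bound_Suc_diff_less:
  assumes "0 < p"
  shows "real (seg_bound N p (Suc r) - seg_bound N p r) < real N / real p + 1"
proof -
  have "(r * N + N) div p * p \<le> r * N + N" by (rule div_times_less_eq_dividend)
  moreover have "r * N < r * N div p * p + p"
    using div_mult_mod_eq[of "r * N" p] mod_less_divisor[OF assms, of "r * N"] by linarith
  ultimately have "((r * N + N) div p - r * N div p) * p < N + p"
    using assms unfolding diff_mult_distrib by linarith
  moreover have "seg_bound N p (Suc r) = (r * N + N) div p" "seg_bound N p r = r * N div p"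
    unfolding seg_bound_def by (simp_all add: add.commute)
  ultimately have "(seg_bound N p (Suc r) - seg_bound N p r) * p < N + p" by simp
  then have "real (seg_bound N p (Suc r) - seg_bound N p r) * real p < real N + real p"
    by (metis of_nat_add of_nat_less_iff of_nat_mult)
  with assms show ?thesis by (simp add: field_simps)
qed

context
  fixes le and A B :: "'a list" and p :: nat
  assumes tp: "total_preorder le" and sA: "sorted_wrt le A" and sB: "sorted_wrt le B"
    and p_pos: "0 < p"
begin

lemma co_rank_seg_bound:
  "r \<le> p \<Longrightarrow> co_rank le (seg_bound (length A + length B) p r) A B = Some (pe_corank le A B p r)"
  using co_rank_is_co_rank[OF tp sA sB seg_bound_le[OF _ p_pos]] unfolding pe_corank_def by force

lemma pe_corank_is_co_rank:
  assumes "r \<le> p" and jk: "pe_corank le A B p r = (j, k)"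
  shows "j + k = seg_bound (length A + length B) p r"
    and "j \<le> length A" and "k \<le> length B" and "is_co_rank le A B j k"
  using co_rank_is_co_rank[OF tp sA sB seg_bound_le[OF assms(1) p_pos]] co_rank_seg_bound[OF assms(1)] jk
  by auto

lemma pe_corank_mono:
  assumes "r < p" and jk0: "pe_corank le A B p r = (j0, k0)" and jk1: "pe_corank le A B p (Suc r) = (j1, k1)"
  shows "j0 \<le> j1 \<and> k0 \<le> k1"
proof -
  have r: "r \<le> p" "Suc r \<le> p" using assms(1) by simp_all
  show ?thesis
    using is_co_rank_mono[OF tp sA sB pe_corank_is_co_rank(4)[OF r(1) jk0] pe_corank_is_co_rank(4)[OF r(2) jk1]]
      pe_corank_is_co_rank(1-3)[OF r(1) jk0] pe_corank_is_co_rank(1-3)[OF r(2) jk1] seg_bound_mono[of r "Suc r"]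
    by simp
qed

lemma pe_work_eq:
  assumes "r < p"
  shows "pe_work le A B p r = seg_bound (length A + length B) p (Suc r) - seg_bound (length A + length B) p r"
proof -
  obtain j0 k0 j1 k1 where jk: "pe_corank le A B p r = (j0, k0)" "pe_corank le A B p (Suc r) = (j1, k1)"
    by fastforce
  with pe_corank_mono[OF assms jk] pe_corank_is_co_rank(1)[of r] pe_corank_is_co_rank(1)[of "Suc r"] assms
  show ?thesis unfolding pe_work_def by simp
qed

lemma length_pe_output:
  assumes "r < p"
  shows "length (pe_output le A B p r) = pe_work le A B p r"
proof -
  obtain j0 k0 j1 k1 where jk: "pe_corank le A B p r = (j0, k0)" "pe_corank le A B p (Suc r) = (j1, k1)"
    by fastforce
  with pe_corank_is_co_rank(2,3)[of "Suc r"] assms show ?thesis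
    unfolding pe_output_def pe_work_def slice_def by simp
qed

lemma stable_merge_drop_pe_corank:
  "r \<le> p \<Longrightarrow> pe_corank le A B p r = (j, k) \<Longrightarrow>
     stable_merge le (drop j A) (drop k B) = concat (map (pe_output le A B p) [r..<p])"
proof (induction r arbitrary: j k rule: inc_induct)
  case base
  then have "j + k = length A + length B" "j \<le> length A" "k \<le> length B"
    using pe_corank_is_co_rank[of p j k] seg_bound_self[OF p_pos] by auto
  then show ?case by simp
next
  case (step r)
  obtain j1 k1 where jk1: "pe_corank le A B p (Suc r) = (j1, k1)" by fastforce
  have r: "Suc r \<le> p" using step.hyps(2) by simp
  note bounds = pe_corank_mono[OF step.hyps(2) step.prems jk1] pe_corank_is_co_rank(2,3)[OF r jk1]
  have ok: "is_co_rank le (drop j A) (drop k B) (j1 - j) (k1 - k)"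
    using is_co_rank_drop[OF pe_corank_is_co_rank(4)[OF r jk1]] bounds by simp
  have "stable_merge le (drop j A) (drop k B)
      = stable_merge le (take (j1 - j) (drop j A)) (take (k1 - k) (drop k B))
        @ stable_merge le (drop (j1 - j) (drop j A)) (drop (k1 - k) (drop k B))"
    by (rule stable_merge_split_at_co_rank[OF tp sorted_wrt_drop[OF sA] sorted_wrt_drop[OF sB] _ _ ok])
      (use bounds in auto)
  also have "\<dots> = pe_output le A B p r @ stable_merge le (drop j1 A) (drop k1 B)"
    using bounds step.prems jk1 unfolding pe_output_def slice_def by simp
  also have "\<dots> = concat (map (pe_output le A B p) [r..<p])"
    using step.IH[OF jk1] step.hyps(2) by (simp add: upt_conv_Cons)
  finally show ?case .
qed

lemma par_merge_eq_stable_merge: "par_merge le A B p = stable_merge le A B"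
proof -
  have "pe_corank le A B p 0 = (0, 0)"
    using pe_corank_is_co_rank(1)[of 0] unfolding seg_bound_def by (cases "pe_corank le A B p 0") auto
  from stable_merge_drop_pe_corank[OF _ this] show ?thesis unfolding par_merge_def by simp
qed

lemma pe_work_less:
  assumes "r < p"
  shows "real (pe_work le A B p r) < real (length A + length B) / real p + 1"
  using seg_bound_Suc_diff_less[OF p_pos, of "length A + length B" r] unfolding pe_work_eq[OF assms] .

lemma pe_time_le:
  assumes "r < p"
  shows "real (pe_time le A B p r)
    \<le> 6 * (real (length A + length B) / real p + log 2 (real (min (length A) (length B)) + 1) + 1)"
proof -
  let ?N = "length A + length B" and ?L = "log 2 (real (min (length A) (length B)) + 1)"
  have "0 \<le> ?L" "0 \<le> real ?N / real p" by simp_all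
  have steps: "real (co_rank_steps le (seg_bound ?N p r') A B) \<le> ?L + 2" if "r' \<le> p" for r'
    using co_rank_steps_le_log[OF tp sA sB seg_bound_le[OF that p_pos]] .
  have arith: "1 + a + b + w \<le> 6 * (x + L + 1)"
    if "a \<le> L + 2" "b \<le> L + 2" "w < x + 1" "0 \<le> L" "0 \<le> x" for a b w x L :: real
    using that by argo
  have "real (pe_time le A B p r) = 1 + real (co_rank_steps le (seg_bound ?N p r) A B)
      + real (co_rank_steps le (seg_bound ?N p (Suc r)) A B) + real (pe_work le A B p r)"
    unfolding pe_time_def by simp
  also have "\<dots> \<le> 6 * (real ?N / real p + ?L + 1)"
    by (rule arith[OF steps[OF less_imp_le[OF assms]] steps[OF Suc_leI[OF assms]] pe_work_less[OF assms]])
      simp_all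
  finally show ?thesis .
qed

end

theorem proposition2:
  shows "(\<forall>(le :: 'a \<Rightarrow> 'a \<Rightarrow> bool) A B p.
            total_preorder le \<and> sorted_wrt le A \<and> sorted_wrt le B \<and> 1 \<le> p \<longrightarrow>
              (\<forall>r \<le> p. co_rank le (seg_bound (length A + length B) p r) A B \<noteq> None)
            \<and> (\<forall>r < p. length (pe_output le A B p r)
                   = seg_bound (length A + length B) p (Suc r) - seg_bound (length A + length B) p r)
            \<and> par_merge le A B p = stable_merge le A B
            \<and> (\<forall>r < p. real (pe_work le A B p r) \<le> \<lceil>real (length A + length B) / real p\<rceil>))
       \<and> (\<exists>c :: real. \<forall>(le :: 'a \<Rightarrow> 'a \<Rightarrow> bool) A B p.
            total_preorder le \<and> sorted_wrt le A \<and> sorted_wrt le B \<and> 1 \<le> p \<longrightarrow>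
              (\<forall>r < p. real (pe_time le A B p r)
                 \<le> c * (real (length A + length B) / real p
                        + log 2 (real (min (length A) (length B)) + 1) + 1)))"
proof (intro conjI allI impI exI[of _ 6])
  fix le :: "'a \<Rightarrow> 'a \<Rightarrow> bool" and A B and p :: nat
  assume "total_preorder le \<and> sorted_wrt le A \<and> sorted_wrt le B \<and> 1 \<le> p"
  then have tp: "total_preorder le" and sA: "sorted_wrt le A" and sB: "sorted_wrt le B" and p: "0 < p"
    by auto
  show "co_rank le (seg_bound (length A + length B) p r) A B \<noteq> None" if "r \<le> p" for r
    using co_rank_seg_bound[OF tp sA sB p that] by simp
  show "length (pe_output le A B p r)
      = seg_bound (length A + length B) p (Suc r) - seg_bound (length A + length B) p r" if "r < p" for r
    using length_pe_output[OF tp sA sB p that] pe_work_eq[OF tp sA sB p that] by simp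
  show "par_merge le A B p = stable_merge le A B"
    by (rule par_merge_eq_stable_merge[OF tp sA sB p])
  show "real (pe_work le A B p r) \<le> \<lceil>real (length A + length B) / real p\<rceil>" if "r < p" for r
    using of_nat_le_ceiling_if_less[OF pe_work_less[OF tp sA sB p that]] .
  show "real (pe_time le A B p r) \<le> 6 * (real (length A + length B) / real p
      + log 2 (real (min (length A) (length B)) + 1) + 1)" if "r < p" for r
    by (rule pe_time_le[OF tp sA sB p that])
qed

end
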